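(* There is an absolute constant $c>0$ such that the following holds. Let $\mathcal G$ be any linear congestion game with $n\ge 3$ players, let $\beta\ge1$ and $T\ge n$, and consider any best response dynamics starting from an arbitrary initial state and satisfying the $(T,\beta)$-Fairness Condition. Then the state $S$ reached after the first $\lceil\log\log n\rceil$ of its $\beta$-bounded $T$-coverings (hence after at most $T\lceil\log\log n\rceil$ best responses) satisfies $C(S)\le c\,\beta\,\mathrm{OPT}$, i.e. $C(S)/\mathrm{OPT}=O(\beta)$.
   Context: A linear congestion game has players $N=\{1,\dots,n\}$, a finite resource set $E$, strategy sets $\Sigma_i\subseteq 2^E$, and delay functions $f_e(x)=a_ex+b_e$ with $a_e,b_e\ge 0$. For a profile $S=(s_1,\dots,s_n)$, $n_e(S)=|\{i:e\in s_i\}|$, the cost of player $i$ is $c_i(S)=\sum_{e\in s_i}f_e(n_e(S))$, the social cost is $C(S)=\sum_i c_i(S)$, and $\mathrm{OPT}=\min_S C(S)$ (assumed positive). A best response of player $i$ in $S$ is a strategy $s_i^b\in\Sigma_i$ minimizing $c_i(S_{-i},\cdot)$ (where $(S_{-i},s_i')$ replaces $s_i$ by $s_i'$); if no strategy strictly decreases $i$'s cost, the best response is $s_i$ itself. A best response dynamics is a sequence of states each obtained from the previous one by a best response of some player. A $T$-covering is a segment of $T$ consecutive best responses of the dynamics in which every player moves at least once; it is $\beta$-bounded if moreover every player moves at most $\beta$ times in it. A dynamics satisfies the $(T,\beta)$-Fairness Condition if it can be decomposed into a sequence of consecutive $\beta$-bounded $T$-coverings. Logarithms are base 2. *)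

theory Defs
  imports Main "HOL-Library.FuncSet" Complex_Main
begin

(* Players are 0..<n; resources are natural numbers in the finite set E;
   profiles are functions from players to strategies (values at i >= n are ignored). *)

definition linear_congestion_game ::
  "nat \<Rightarrow> nat set \<Rightarrow> (nat \<Rightarrow> nat set set) \<Rightarrow> (nat \<Rightarrow> real) \<Rightarrow> (nat \<Rightarrow> real) \<Rightarrow> bool" where
  "linear_congestion_game n E \<Sigma> a b \<longleftrightarrow>
     finite E \<and> (\<forall>i<n. \<Sigma> i \<noteq> {} \<and> \<Sigma> i \<subseteq> Pow E) \<and> (\<forall>e\<in>E. a e \<ge> 0 \<and> b e \<ge> 0)"

definition load :: "nat \<Rightarrow> (nat \<Rightarrow> nat set) \<Rightarrow> nat \<Rightarrow> nat" where
  "load n S e = card {i. i < n \<and> e \<in> S i}"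

definition player_cost ::
  "(nat \<Rightarrow> real) \<Rightarrow> (nat \<Rightarrow> real) \<Rightarrow> nat \<Rightarrow> (nat \<Rightarrow> nat set) \<Rightarrow> nat \<Rightarrow> real" where
  "player_cost a b n S i = (\<Sum>e\<in>S i. a e * real (load n S e) + b e)"

definition social_cost ::
  "(nat \<Rightarrow> real) \<Rightarrow> (nat \<Rightarrow> real) \<Rightarrow> nat \<Rightarrow> (nat \<Rightarrow> nat set) \<Rightarrow> real" where
  "social_cost a b n S = (\<Sum>i<n. player_cost a b n S i)"

definition OPT ::
  "nat \<Rightarrow> (nat \<Rightarrow> nat set set) \<Rightarrow> (nat \<Rightarrow> real) \<Rightarrow> (nat \<Rightarrow> real) \<Rightarrow> real" where
  "OPT n \<Sigma> a b = Min (social_cost a b n ` (Pi\<^sub>E {..<n} \<Sigma>))"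

definition valid_profile :: "nat \<Rightarrow> (nat \<Rightarrow> nat set set) \<Rightarrow> (nat \<Rightarrow> nat set) \<Rightarrow> bool" where
  "valid_profile n \<Sigma> S \<longleftrightarrow> (\<forall>i<n. S i \<in> \<Sigma> i)"

definition best_response_step ::
  "nat \<Rightarrow> (nat \<Rightarrow> nat set set) \<Rightarrow> (nat \<Rightarrow> real) \<Rightarrow> (nat \<Rightarrow> real) \<Rightarrow>
   (nat \<Rightarrow> nat set) \<Rightarrow> nat \<Rightarrow> (nat \<Rightarrow> nat set) \<Rightarrow> bool" where
  "best_response_step n \<Sigma> a b S i S' \<longleftrightarrow> i < n \<and>
     (\<exists>s'\<in>\<Sigma> i. S' = S(i := s') \<and>
        (if (\<exists>s\<in>\<Sigma> i. player_cost a b n (S(i := s)) i < player_cost a b n S i)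
         then (\<forall>s\<in>\<Sigma> i. player_cost a b n (S(i := s')) i \<le> player_cost a b n (S(i := s)) i)
         else s' = S i))"

definition bounded_covering :: "nat \<Rightarrow> real \<Rightarrow> nat \<Rightarrow> (nat \<Rightarrow> nat) \<Rightarrow> nat \<Rightarrow> bool" where
  "bounded_covering n \<beta> T p k \<longleftrightarrow>
     (\<forall>i<n. 1 \<le> card {t \<in> {k*T..<(k+1)*T}. p t = i}
            \<and> real (card {t \<in> {k*T..<(k+1)*T}. p t = i}) \<le> \<beta>)"

end

theory Submission
  imports Defs "HOL-Analysis.Convex"
begin

(* Fix an optimum profile O with social cost U = OPT.  For one beta-bounded T-covering
   starting in profile S and ending in S' we show two estimates:
   (a) C(S') <= (2n+2) U, because loads never exceed n;
   (b) C(S') <= 10 beta U + 4 W, where W = sum_e a_e l_e(O) l_e(S).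
   Both come from ordering the players by their last move in the covering: a player's
   cost right after its last move bounds its share of C(S') (up to a factor 2), and a
   best response costs no more than deviating to O.  For (b) the loads during the covering
   are bounded by l_e(S) + sqrt(2 Z_e), where Z_e collects the loads that movers see on e,
   and Cauchy-Schwarz controls the contribution of the Z_e.
   Since W^2 <= U C(S) (Cauchy-Schwarz again), the normalised cost
   z = max 1 (C / (64 beta U)) satisfies z' ^ 2 <= z, while (a) gives z <= n after the
   first covering.  After K = ceil(log log n) coverings therefore z <= 4, i.e.
   C <= 256 beta OPT.  (The hypothesis T >= n is implied by fairness and not needed.) *)

section \<open>Inequalities over the reals\<close>

lemma weighted_Cauchy_Schwarz:
  fixes w x y :: "'a \<Rightarrow> real"
  assumes "\<And>i. i \<in> I \<Longrightarrow> w i \<ge> 0"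
  shows "(\<Sum>i\<in>I. w i * x i * y i)\<^sup>2 \<le> (\<Sum>i\<in>I. w i * (x i)\<^sup>2) * (\<Sum>i\<in>I. w i * (y i)\<^sup>2)"
proof -
  have "(\<Sum>i\<in>I. w i * x i * y i) = (\<Sum>i\<in>I. (sqrt (w i) * x i) * (sqrt (w i) * y i))"
    using assms by (intro sum.cong refl) (simp add: algebra_simps flip: power2_eq_square)
  moreover have "(\<Sum>i\<in>I. (sqrt (w i) * z i)\<^sup>2) = (\<Sum>i\<in>I. w i * (z i)\<^sup>2)" for z
    using assms by (intro sum.cong refl) (simp add: power_mult_distrib)
  ultimately show ?thesis
    using Cauchy_Schwarz_ineq_sum[of "\<lambda>i. sqrt (w i) * x i" "\<lambda>i. sqrt (w i) * y i" I] by simp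
qed

lemma card_square_le_ordered_pairs:
  fixes f :: "'a \<Rightarrow> 'b::linorder"
  assumes "finite U"
  shows "real (card U)^2 \<le> 2 * (\<Sum>i\<in>U. real (card {j\<in>U. f j \<le> f i}))"
proof -
  have card_as_sum: "real (card {j\<in>U. P j}) = (\<Sum>j\<in>U. if P j then 1 else 0)" for P
    using assms by (simp add: sum.inter_filter[symmetric])
  have swap: "(\<Sum>i\<in>U. \<Sum>j\<in>U. (if f j \<le> f i then 1 else 0::real))
          = (\<Sum>i\<in>U. \<Sum>j\<in>U. (if f i \<le> f j then 1 else 0::real))"
    by (rule sum.swap)
  have "real (card U)^2 = (\<Sum>i\<in>U. \<Sum>j\<in>U. (1::real))"
    by (simp add: power2_eq_square)
  also have "\<dots> \<le> (\<Sum>i\<in>U. \<Sum>j\<in>U. ((if f j \<le> f i then 1 else 0) + (if f i \<le> f j then 1 else 0::real)))"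
    by (intro sum_mono) auto
  also have "\<dots> = 2 * (\<Sum>i\<in>U. \<Sum>j\<in>U. (if f j \<le> f i then 1 else 0::real))"
    using swap by (simp add: sum.distrib)
  finally show ?thesis by (simp add: card_as_sum)
qed

lemma quadratic_self_bound:
  fixes w v P U :: real
  assumes "w\<^sup>2 \<le> 2 * P * (v + w + U)" "0 < U" "U \<le> P" "0 \<le> v"
  shows "w \<le> 4 * P + v"
proof (rule ccontr)
  assume "\<not> ?thesis"
  hence "(4 * P + v) * (2 * P + v) < w * (w - 2 * P)"
    using assms by (intro mult_strict_mono) auto
  moreover have "(4 * P + v) * (2 * P + v) = 8 * (P * P) + 6 * (P * v) + v * v"
    and "w * (w - 2 * P) = w\<^sup>2 - 2 * (P * w)"
    and "2 * P * (v + w + U) = 2 * (P * v) + 2 * (P * w) + 2 * (P * U)"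
    by (simp_all add: algebra_simps power2_eq_square)
  moreover have "P * U \<le> P * P" using assms by (intro mult_left_mono) auto
  moreover have "0 \<le> v * v" "0 \<le> P * v" "0 \<le> P * P" using assms by auto
  ultimately show False using assms(1) by linarith
qed

lemma normalised_cost_square:
  fixes \<beta> U A w C :: real
  assumes \<beta>: "\<beta> \<ge> 1" and U: "U > 0" and A: "A \<ge> 0" and w: "w \<ge> 0" "w\<^sup>2 \<le> U * A"
    and C: "C \<le> 10 * \<beta> * U + 4 * w"
  defines "D \<equiv> 64 * \<beta> * U"
  shows "(max 1 (C / D))\<^sup>2 \<le> max 1 (A / D)"
proof -
  define q where "q = max 1 (A / D)"
  define s where "s = sqrt q"
  have D: "D > 0" and \<beta>U: "\<beta> * U > 0" using \<beta> U by (simp_all add: D_def)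
  have q1: "q \<ge> 1" and s1: "s \<ge> 1" and sq: "s\<^sup>2 = q" unfolding s_def q_def by auto
  have "A / D \<le> q" unfolding q_def by simp
  hence "A \<le> D * q" by (simp add: pos_divide_le_eq[OF D] mult.commute)
  hence "w\<^sup>2 \<le> U * (D * q)" using w(2) U by (meson mult_left_mono less_imp_le order_trans)
  also have "\<dots> = 64 * (U * U) * (\<beta> * q)" by (simp add: D_def algebra_simps)
  also have "\<dots> \<le> 64 * (U * U) * ((\<beta> * \<beta>) * q)"
    using \<beta> q1 by (intro mult_left_mono mult_right_mono) (auto simp: mult_le_cancel_left1)
  also have "\<dots> = (8 * (\<beta> * U) * s)\<^sup>2"
    unfolding power_mult_distrib sq[symmetric] by (simp add: power2_eq_square algebra_simps)
  finally have "w \<le> 8 * (\<beta> * U) * s"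
    by (rule power2_le_imp_le) (use \<beta> U s1 in simp)
  hence "C \<le> 10 * (\<beta> * U) + 32 * (\<beta> * U) * s" using C by (simp add: mult.assoc)
  also have "\<dots> \<le> 64 * (\<beta> * U) * s"
    using \<beta>U mult_left_mono[OF s1, of "\<beta> * U"] by linarith
  also have "\<dots> = D * s" unfolding D_def by (simp add: mult.assoc)
  finally have "max 1 (C / D) \<le> s" using D s1 by (simp add: pos_divide_le_eq mult.commute)
  hence "(max 1 (C / D))\<^sup>2 \<le> s\<^sup>2" by (intro power_mono) auto
  thus ?thesis using sq q_def by simp
qed

lemma iterated_square_root_bound:
  fixes z :: "nat \<Rightarrow> real"
  assumes "1 \<le> K" "\<And>k. z k \<ge> 0" "z 1 \<le> 2 ^ (2 ^ K)"
    and sq: "\<And>k. 1 \<le> k \<Longrightarrow> k < K \<Longrightarrow> (z (Suc k))\<^sup>2 \<le> z k"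
  shows "z K \<le> 4"
proof -
  have pow: "z k ^ (2 ^ (k - 1)) \<le> z 1" if "1 \<le> k" "k \<le> K" for k
    using that
  proof (induction k rule: dec_induct)
    case (step k)
    have "z (Suc k) ^ (2 ^ (Suc k - 1)) = ((z (Suc k))\<^sup>2) ^ (2 ^ (k - 1))"
      using step(1) by (cases k) (simp_all add: power_mult[symmetric] mult.commute)
    also have "\<dots> \<le> z k ^ (2 ^ (k - 1))"
      using sq[of k] step assms(2) by (intro power_mono) auto
    finally show ?case using step by simp
  qed simp
  have "(4::real) ^ (2 ^ (K - 1)) = 2 ^ (2 ^ K)"
    using assms(1) by (cases K) (simp_all add: power_mult)
  hence "z K ^ (2 ^ (K - 1)) \<le> 4 ^ (2 ^ (K - 1))"
    using pow[OF assms(1) order_refl] assms(3) by simp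
  thus ?thesis using assms(2)[of K] by simp
qed

lemma loglog_rounds:
  assumes "n \<ge> (3::nat)"
  defines "K \<equiv> nat \<lceil>log 2 (log 2 (real n))\<rceil>"
  shows "K \<ge> 1" "real n \<le> 2 ^ (2 ^ K)"
proof -
  have l1: "log 2 (real n) > 1"
    using assms less_log_iff[of 2 "real n" 1] by simp
  hence "log 2 (log 2 (real n)) > 0" by simp
  thus "K \<ge> 1" unfolding K_def by linarith
  have "log 2 (log 2 (real n)) \<le> real K" unfolding K_def by linarith
  hence "log 2 (real n) \<le> 2 ^ K"
    using l1 by (simp add: log_le_iff powr_realpow)
  moreover have "(2::real) powr (2 ^ K) = 2 ^ (2 ^ K)"
    using powr_realpow[of 2 "2 ^ K"] by simp
  ultimately show "real n \<le> 2 ^ (2 ^ K)"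
    using assms(1) by (simp add: log_le_iff)
qed

section \<open>A linear congestion game\<close>

locale game =
  fixes n :: nat and E :: "nat set" and Sg :: "nat \<Rightarrow> nat set set" and a b :: "nat \<Rightarrow> real"
  assumes lcg: "linear_congestion_game n E Sg a b"
begin

abbreviation "ld S e \<equiv> real (load n S e)"
abbreviation "cost S i \<equiv> player_cost a b n S i"
abbreviation "SC S \<equiv> social_cost a b n S"
abbreviation "valid S \<equiv> valid_profile n Sg S"

lemma finite_E: "finite E"
  and a_nonneg: "e \<in> E \<Longrightarrow> a e \<ge> 0"
  and b_nonneg: "e \<in> E \<Longrightarrow> b e \<ge> 0"
  and strategy_subset: "i < n \<Longrightarrow> s \<in> Sg i \<Longrightarrow> s \<subseteq> E"
  using lcg unfolding linear_congestion_game_def by auto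

lemma valid_subset: "valid S \<Longrightarrow> i < n \<Longrightarrow> S i \<subseteq> E"
  using strategy_subset unfolding valid_profile_def by auto

lemma sum_players_resources:
  assumes "valid S"
  shows "(\<Sum>i<n. \<Sum>e\<in>S i. g i e) = (\<Sum>e\<in>E. \<Sum>i\<in>{i. i < n \<and> e \<in> S i}. g i e)"
proof -
  have "(\<Sum>i<n. \<Sum>e\<in>S i. g i e) = (\<Sum>i\<in>{..<n}. \<Sum>e\<in>{e. e \<in> E \<and> e \<in> S i}. g i e)"
    using valid_subset[OF assms] by (intro sum.cong refl) blast+
  also have "\<dots> = (\<Sum>e\<in>E. \<Sum>i\<in>{i. i \<in> {..<n} \<and> e \<in> S i}. g i e)"
    by (rule sum.swap_restrict) (auto simp: finite_E)
  finally show ?thesis by simp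
qed

lemma load_le_n: "load n S e \<le> n"
  unfolding load_def by (rule order_trans[OF card_mono[of "{..<n}"]]) auto

lemma load_le_square: "ld S e \<le> (ld S e)\<^sup>2"
  by (cases "load n S e") (auto simp: power2_eq_square)

lemma load_update_le: "load n (S(i := s)) e \<le> load n S e + 1"
proof -
  have "{j. j < n \<and> e \<in> (S(i := s)) j} \<subseteq> insert i {j. j < n \<and> e \<in> S j}" by auto
  hence "load n (S(i := s)) e \<le> card (insert i {j. j < n \<and> e \<in> S j})"
    unfolding load_def by (intro card_mono) auto
  also have "\<dots> \<le> load n S e + 1" unfolding load_def by (simp add: card_insert_if)
  finally show ?thesis .
qed

lemma social_cost_by_resources:
  assumes "valid S"
  shows "SC S = (\<Sum>e\<in>E. a e * (ld S e)\<^sup>2 + b e * ld S e)"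
proof -
  have "SC S = (\<Sum>e\<in>E. \<Sum>i\<in>{i. i < n \<and> e \<in> S i}. a e * ld S e + b e)"
    unfolding social_cost_def player_cost_def by (rule sum_players_resources[OF assms])
  also have "\<dots> = (\<Sum>e\<in>E. a e * (ld S e)\<^sup>2 + b e * ld S e)"
    by (intro sum.cong refl) (simp add: load_def power2_eq_square algebra_simps)
  finally show ?thesis .
qed

lemma quadratic_part_le_social_cost:
  assumes "valid S"
  shows "(\<Sum>e\<in>E. a e * (ld S e)\<^sup>2) \<le> SC S"
  unfolding social_cost_by_resources[OF assms]
  using b_nonneg by (intro sum_mono) auto

lemma quadratic_part_nonneg: "(\<Sum>e\<in>E. a e * (ld S e)\<^sup>2) \<ge> 0"
  using a_nonneg by (intro sum_nonneg) auto

lemma social_cost_nonneg: "valid S \<Longrightarrow> SC S \<ge> 0"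
  using quadratic_part_le_social_cost quadratic_part_nonneg order_trans by blast

lemma mixed_load_term_square:
  assumes "valid Opt" "valid S"
  shows "(\<Sum>e\<in>E. a e * ld Opt e * ld S e)\<^sup>2 \<le> SC Opt * SC S"
proof -
  have "(\<Sum>e\<in>E. a e * ld Opt e * ld S e)\<^sup>2
        \<le> (\<Sum>e\<in>E. a e * (ld Opt e)\<^sup>2) * (\<Sum>e\<in>E. a e * (ld S e)\<^sup>2)"
    using a_nonneg by (rule weighted_Cauchy_Schwarz)
  also have "\<dots> \<le> SC Opt * SC S"
    using quadratic_part_le_social_cost[OF assms(1)] quadratic_part_le_social_cost[OF assms(2)]
      social_cost_nonneg[OF assms(1)] quadratic_part_nonneg[of S]
    by (intro mult_mono) auto
  finally show ?thesis .
qed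

lemma optimum_exists:
  obtains Opt where "valid Opt" "SC Opt = OPT n Sg a b"
proof -
  have "finite (Sg i)" if "i < n" for i
    using strategy_subset[OF that] finite_E by (meson finite_Pow_iff finite_subset subsetI PowI)
  hence "finite (Pi\<^sub>E {..<n} Sg)" by (intro finite_PiE) auto
  moreover have "Pi\<^sub>E {..<n} Sg \<noteq> {}"
    using lcg unfolding linear_congestion_game_def by (simp add: PiE_eq_empty_iff)
  ultimately have "OPT n Sg a b \<in> social_cost a b n ` (Pi\<^sub>E {..<n} Sg)"
    unfolding OPT_def by (intro Min_in) auto
  then obtain S where "S \<in> Pi\<^sub>E {..<n} Sg" "SC S = OPT n Sg a b" by auto
  thus ?thesis using that unfolding valid_profile_def by auto
qed

lemma best_response_player: "best_response_step n Sg a b S i S' \<Longrightarrow> i < n"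
  unfolding best_response_step_def by auto

lemma best_response_others: "best_response_step n Sg a b S i S' \<Longrightarrow> j \<noteq> i \<Longrightarrow> S' j = S j"
  unfolding best_response_step_def by auto

lemma best_response_valid: "best_response_step n Sg a b S i S' \<Longrightarrow> valid S \<Longrightarrow> valid S'"
  unfolding best_response_step_def valid_profile_def by auto

lemma best_response_le_deviation:
  assumes "best_response_step n Sg a b S i S'" "s \<in> Sg i"
  shows "cost S' i \<le> cost (S(i := s)) i"
proof -
  from assms(1) obtain s' where s': "S' = S(i := s')"
    and choice: "if (\<exists>s\<in>Sg i. cost (S(i := s)) i < cost S i)
         then (\<forall>s\<in>Sg i. cost (S(i := s')) i \<le> cost (S(i := s)) i)
         else s' = S i"
    unfolding best_response_step_def by blast
  show ?thesis
  proof (cases "\<exists>s\<in>Sg i. cost (S(i := s)) i < cost S i")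
    case True with choice s' assms(2) show ?thesis by auto
  next
    case False
    with choice s' have "S' = S" by auto
    with False assms(2) show ?thesis by (simp add: not_less)
  qed
qed

text \<open>Deviating to s costs at most sum_{e in s} a_e (l_e + 1) + b_e.\<close>
definition deviation_cost :: "(nat \<Rightarrow> real) \<Rightarrow> nat set \<Rightarrow> real" where
  "deviation_cost L s = (\<Sum>e\<in>s. a e * (L e + 1) + b e)"

lemma best_response_cost_bound:
  assumes "best_response_step n Sg a b S i S'" "s \<in> Sg i"
  shows "cost S' i \<le> deviation_cost (ld S) s"
proof -
  have s: "s \<subseteq> E" using strategy_subset[OF best_response_player[OF assms(1)] assms(2)] .
  have "cost (S(i := s)) i \<le> deviation_cost (ld S) s"
    unfolding player_cost_def deviation_cost_def fun_upd_same
  proof (intro sum_mono)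
    fix e assume "e \<in> s"
    moreover have "ld (S(i := s)) e \<le> ld S e + 1" using load_update_le[of S i s e] by linarith
    ultimately show "a e * ld (S(i := s)) e + b e \<le> a e * (ld S e + 1) + b e"
      using a_nonneg s by (simp add: mult_left_mono subset_iff)
  qed
  thus ?thesis using best_response_le_deviation[OF assms] by linarith
qed

lemma deviation_cost_mono:
  assumes "s \<subseteq> E" "\<And>e. e \<in> s \<Longrightarrow> L e \<le> M e"
  shows "deviation_cost L s \<le> deviation_cost M s"
  unfolding deviation_cost_def using assms a_nonneg by (intro sum_mono) (auto intro!: mult_left_mono)

lemma sum_deviation_costs:
  assumes "valid Opt"
  shows "(\<Sum>i<n. deviation_cost M (Opt i)) \<le> (\<Sum>e\<in>E. a e * ld Opt e * M e) + SC Opt"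
proof -
  have "(\<Sum>i<n. deviation_cost M (Opt i)) = (\<Sum>e\<in>E. ld Opt e * (a e * (M e + 1) + b e))"
    unfolding deviation_cost_def sum_players_resources[OF assms] by (simp add: load_def)
  also have "\<dots> \<le> (\<Sum>e\<in>E. a e * ld Opt e * M e + (a e * (ld Opt e)\<^sup>2 + b e * ld Opt e))"
  proof (intro sum_mono)
    fix e assume e: "e \<in> E"
    have "a e * ld Opt e \<le> a e * (ld Opt e)\<^sup>2"
      using load_le_square a_nonneg[OF e] by (rule mult_left_mono)
    thus "ld Opt e * (a e * (M e + 1) + b e) \<le> a e * ld Opt e * M e + (a e * (ld Opt e)\<^sup>2 + b e * ld Opt e)"
      by (simp add: algebra_simps)
  qed
  also have "\<dots> = (\<Sum>e\<in>E. a e * ld Opt e * M e) + SC Opt"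
    by (simp add: sum.distrib social_cost_by_resources[OF assms])
  finally show ?thesis .
qed

end

section \<open>A segment of best-response dynamics\<close>

locale br_segment = game +
  fixes X :: "nat \<Rightarrow> nat \<Rightarrow> nat set" and p :: "nat \<Rightarrow> nat" and t0 T :: nat
  assumes steps: "\<forall>t\<in>{t0..<t0+T}. best_response_step n Sg a b (X t) (p t) (X (Suc t))"
    and valid_start: "valid (X t0)"
begin

lemma br_step: "t0 \<le> t \<Longrightarrow> t < t0 + T \<Longrightarrow> best_response_step n Sg a b (X t) (p t) (X (Suc t))"
  using steps by auto

lemma mover_lt_n: "t0 \<le> t \<Longrightarrow> t < t0 + T \<Longrightarrow> p t < n"
  using br_step best_response_player by blast

lemma valid_during: "t0 \<le> t \<Longrightarrow> t \<le> t0 + T \<Longrightarrow> valid (X t)"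
proof (induction t rule: dec_induct)
  case (step m)
  thus ?case using best_response_valid[OF br_step[of m]] by simp
qed (rule valid_start)

lemma strategy_unchanged:
  assumes "t0 \<le> u" "u \<le> v" "v \<le> t0 + T" "\<forall>t\<in>{u..<v}. p t \<noteq> i"
  shows "X v i = X u i"
  using assms(2-4)
proof (induction v rule: dec_induct)
  case (step m)
  hence "p m \<noteq> i" and "t0 \<le> m" "m < t0 + T" using assms(1) by auto
  hence "X (Suc m) i = X m i" using best_response_others[OF br_step] by metis
  thus ?case using step by auto
qed simp

definition moves :: "nat \<Rightarrow> nat \<Rightarrow> nat set" where
  "moves j t = {\<tau>\<in>{t0..<t}. p \<tau> = j}"

definition last_move :: "nat \<Rightarrow> nat \<Rightarrow> nat" where
  "last_move j t = Max (moves j t)"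

lemma last_move_in:
  assumes "moves j t \<noteq> {}"
  shows "t0 \<le> last_move j t" "last_move j t < t" "p (last_move j t) = j"
proof -
  have "last_move j t \<in> moves j t"
    using assms unfolding last_move_def moves_def by (intro Max_in) auto
  thus "t0 \<le> last_move j t" "last_move j t < t" "p (last_move j t) = j"
    unfolding moves_def by auto
qed

lemma move_le_last_move: "\<tau> \<in> moves j t \<Longrightarrow> \<tau> \<le> last_move j t"
  unfolding last_move_def moves_def by (intro Max_ge) auto

lemma frozen_after_last_move:
  assumes "t \<le> t0 + T" "moves j t \<noteq> {}" "last_move k t \<le> last_move j t"
  shows "X (Suc (last_move j t)) k = X t k"
proof (rule strategy_unchanged[symmetric])
  show "\<forall>\<tau>\<in>{Suc (last_move j t)..<t}. p \<tau> \<noteq> k"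
  proof (intro ballI notI)
    fix \<tau> assume \<tau>: "\<tau> \<in> {Suc (last_move j t)..<t}" and "p \<tau> = k"
    hence "\<tau> \<in> moves k t" using last_move_in[OF assms(2)] unfolding moves_def by auto
    thus False using move_le_last_move[of \<tau> k t] \<tau> assms(3) by auto
  qed
qed (use last_move_in[OF assms(2)] assms(1) in auto)

text \<open>Order P by last moves: right after the last move of j all earlier last movers
  already sit on e.\<close>
lemma last_movers_load_square:
  assumes "t \<le> t0 + T" "P \<subseteq> {j. j < n \<and> e \<in> X t j \<and> moves j t \<noteq> {}}"
  shows "(real (card P))\<^sup>2 \<le> 2 * (\<Sum>j\<in>P. ld (X (Suc (last_move j t))) e)"
proof -
  have "finite P" using assms(2) by (rule finite_subset) auto
  hence "(real (card P))\<^sup>2 \<le> 2 * (\<Sum>j\<in>P. real (card {k\<in>P. last_move k t \<le> last_move j t}))"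
    by (rule card_square_le_ordered_pairs)
  also have "\<dots> \<le> 2 * (\<Sum>j\<in>P. ld (X (Suc (last_move j t))) e)"
  proof -
    have "{k\<in>P. last_move k t \<le> last_move j t} \<subseteq> {k. k < n \<and> e \<in> X (Suc (last_move j t)) k}"
      if "j \<in> P" for j
      using that assms frozen_after_last_move[of t j] by auto
    hence "card {k\<in>P. last_move k t \<le> last_move j t} \<le> load n (X (Suc (last_move j t))) e"
      if "j \<in> P" for j
      using that unfolding load_def by (intro card_mono) auto
    thus ?thesis by (simp add: sum_mono)
  qed
  finally show ?thesis .
qed

text \<open>Z_e: the total load on e seen by the movers who choose e.\<close>
definition mover_load :: "nat \<Rightarrow> real" where
  "mover_load e = (\<Sum>\<tau>\<in>{\<tau>\<in>{t0..<t0+T}. e \<in> X (Suc \<tau>) (p \<tau>)}. ld (X (Suc \<tau>)) e)"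

lemma mover_load_nonneg: "mover_load e \<ge> 0"
  unfolding mover_load_def by (simp add: sum_nonneg)

text \<open>During the segment the load on e exceeds its initial value by at most sqrt(2 Z_e):
  players that have not moved are counted initially, the others by the key counting step.\<close>
lemma load_during_segment:
  assumes "t0 \<le> t" "t \<le> t0 + T"
  shows "ld (X t) e \<le> ld (X t0) e + sqrt (2 * mover_load e)"
proof -
  define P0 where "P0 = {j. j < n \<and> e \<in> X t j \<and> moves j t = {}}"
  define P1 where "P1 = {j. j < n \<and> e \<in> X t j \<and> moves j t \<noteq> {}}"
  have "ld (X t) e = real (card (P0 \<union> P1))"
    unfolding load_def P0_def P1_def by (intro arg_cong[where f="\<lambda>A. real (card A)"]) auto
  also have "\<dots> \<le> real (card P0) + real (card P1)"
    using card_Un_le[of P0 P1] by linarith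
  finally have split: "ld (X t) e \<le> real (card P0) + real (card P1)" .
  have "P0 \<subseteq> {j. j < n \<and> e \<in> X t0 j}"
  proof
    fix j assume "j \<in> P0"
    hence j: "j < n" "e \<in> X t j" "\<forall>\<tau>\<in>{t0..<t}. p \<tau> \<noteq> j"
      unfolding P0_def moves_def by auto
    thus "j \<in> {j. j < n \<and> e \<in> X t0 j}"
      using strategy_unchanged[of t0 t j] assms by simp
  qed
  hence unmoved: "card P0 \<le> load n (X t0) e"
    unfolding load_def by (rule card_mono[rotated]) simp
  have inj: "inj_on (\<lambda>j. last_move j t) P1"
  proof (rule inj_onI)
    fix j k assume "j \<in> P1" "k \<in> P1" "last_move j t = last_move k t"
    moreover have "p (last_move i t) = i" if "i \<in> P1" for i
      using that last_move_in(3) unfolding P1_def by blast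
    ultimately show "j = k" by metis
  qed
  have image: "(\<lambda>j. last_move j t) ` P1 \<subseteq> {\<tau>\<in>{t0..<t0+T}. e \<in> X (Suc \<tau>) (p \<tau>)}"
  proof
    fix \<tau> assume "\<tau> \<in> (\<lambda>j. last_move j t) ` P1"
    then obtain j where j: "j \<in> P1" "\<tau> = last_move j t" by blast
    hence "moves j t \<noteq> {}" "e \<in> X t j" unfolding P1_def by auto
    thus "\<tau> \<in> {\<tau>\<in>{t0..<t0+T}. e \<in> X (Suc \<tau>) (p \<tau>)}"
      using j(2) last_move_in[of j t] frozen_after_last_move[of t j j] assms by auto
  qed
  have "(real (card P1))\<^sup>2 \<le> 2 * (\<Sum>j\<in>P1. ld (X (Suc (last_move j t))) e)"
    using assms(2) by (intro last_movers_load_square) (auto simp: P1_def)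
  also have "(\<Sum>j\<in>P1. ld (X (Suc (last_move j t))) e)
      = (\<Sum>\<tau>\<in>(\<lambda>j. last_move j t) ` P1. ld (X (Suc \<tau>)) e)"
    by (simp add: sum.reindex[OF inj])
  also have "\<dots> \<le> mover_load e" unfolding mover_load_def
    by (rule sum_mono2[OF _ image]) auto
  finally have "real (card P1) \<le> sqrt (2 * mover_load e)" by (simp add: real_le_rsqrt)
  thus ?thesis using split unmoved by linarith
qed

lemma weighted_mover_load_le:
  "(\<Sum>e\<in>E. a e * mover_load e) \<le> (\<Sum>\<tau>\<in>{t0..<t0+T}. cost (X (Suc \<tau>)) (p \<tau>))"
proof -
  let ?R = "{t0..<t0+T}"
  have sub: "X (Suc \<tau>) (p \<tau>) \<subseteq> E" if "\<tau> \<in> ?R" for \<tau>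
    using that valid_subset[OF valid_during mover_lt_n] by auto
  have "(\<Sum>e\<in>E. a e * mover_load e)
      = (\<Sum>e\<in>E. \<Sum>\<tau>\<in>{\<tau>. \<tau> \<in> ?R \<and> e \<in> X (Suc \<tau>) (p \<tau>)}. a e * ld (X (Suc \<tau>)) e)"
    unfolding mover_load_def by (simp add: sum_distrib_left)
  also have "\<dots> = (\<Sum>\<tau>\<in>?R. \<Sum>e\<in>{e. e \<in> E \<and> e \<in> X (Suc \<tau>) (p \<tau>)}. a e * ld (X (Suc \<tau>)) e)"
    by (rule sum.swap_restrict) (auto simp: finite_E)
  also have "\<dots> = (\<Sum>\<tau>\<in>?R. \<Sum>e\<in>X (Suc \<tau>) (p \<tau>). a e * ld (X (Suc \<tau>)) e)"
    using sub by (intro sum.cong refl) blast+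
  also have "\<dots> \<le> (\<Sum>\<tau>\<in>?R. cost (X (Suc \<tau>)) (p \<tau>))"
    unfolding player_cost_def using sub b_nonneg by (intro sum_mono) (auto intro!: sum_mono)
  finally show ?thesis .
qed

lemma sum_over_moves:
  "(\<Sum>\<tau>\<in>{t0..<t0+T}. g (p \<tau>)) = (\<Sum>i<n. real (card (moves i (t0 + T))) * g i)"
proof -
  have "(\<Sum>\<tau>\<in>{t0..<t0+T}. g (p \<tau>)) = (\<Sum>\<tau>\<in>{t0..<t0+T}. \<Sum>i\<in>{i. i \<in> {..<n} \<and> p \<tau> = i}. g i)"
  proof (intro sum.cong refl)
    fix \<tau> assume "\<tau> \<in> {t0..<t0+T}"
    hence "{i. i \<in> {..<n} \<and> p \<tau> = i} = {p \<tau>}" using mover_lt_n by auto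
    thus "g (p \<tau>) = (\<Sum>i\<in>{i. i \<in> {..<n} \<and> p \<tau> = i}. g i)" by simp
  qed
  also have "\<dots> = (\<Sum>i\<in>{..<n}. \<Sum>\<tau>\<in>{\<tau>. \<tau> \<in> {t0..<t0+T} \<and> p \<tau> = i}. g i)"
    by (rule sum.swap_restrict) auto
  finally show ?thesis unfolding moves_def by simp
qed

text \<open>If every player moves, the final social cost is at most twice the sum of the costs
  the players have right after their last moves (the counting step applied to the final
  users of every resource).\<close>
lemma social_cost_le_last_move_costs:
  assumes "\<forall>i<n. moves i (t0 + T) \<noteq> {}"
  shows "SC (X (t0 + T)) \<le> 2 * (\<Sum>i<n. cost (X (Suc (last_move i (t0 + T)))) i)"
proof -
  define S where "S = X (t0 + T)"
  define lm where "lm i = last_move i (t0 + T)" for i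
  define U where "U e = {i. i < n \<and> e \<in> S i}" for e
  have vS: "valid S" unfolding S_def by (rule valid_during) auto
  have final: "X (Suc (lm i)) i = S i" if "i < n" for i
    using frozen_after_last_move[of "t0 + T" i i] assms that unfolding S_def lm_def by auto
  have "SC S = (\<Sum>e\<in>E. a e * (real (card (U e)))\<^sup>2 + b e * real (card (U e)))"
    using social_cost_by_resources[OF vS] unfolding U_def load_def by simp
  also have "\<dots> \<le> (\<Sum>e\<in>E. 2 * (\<Sum>i\<in>U e. a e * ld (X (Suc (lm i))) e + b e))"
  proof (intro sum_mono)
    fix e assume e: "e \<in> E"
    have "(real (card (U e)))\<^sup>2 \<le> 2 * (\<Sum>i\<in>U e. ld (X (Suc (lm i))) e)"
      unfolding lm_def using assms by (intro last_movers_load_square) (auto simp: U_def S_def)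
    hence "a e * (real (card (U e)))\<^sup>2 \<le> a e * (2 * (\<Sum>i\<in>U e. ld (X (Suc (lm i))) e))"
      using a_nonneg[OF e] by (rule mult_left_mono)
    also have "\<dots> = 2 * (\<Sum>i\<in>U e. a e * ld (X (Suc (lm i))) e)"
      by (simp add: sum_distrib_left mult.left_commute)
    finally have "a e * (real (card (U e)))\<^sup>2 \<le> 2 * (\<Sum>i\<in>U e. a e * ld (X (Suc (lm i))) e)" .
    moreover have "b e * real (card (U e)) \<le> 2 * (\<Sum>i\<in>U e. b e)"
      using b_nonneg[OF e] by simp
    ultimately show "a e * (real (card (U e)))\<^sup>2 + b e * real (card (U e))
        \<le> 2 * (\<Sum>i\<in>U e. a e * ld (X (Suc (lm i))) e + b e)"
      by (simp add: sum.distrib)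
  qed
  also have "\<dots> = 2 * (\<Sum>i<n. \<Sum>e\<in>S i. a e * ld (X (Suc (lm i))) e + b e)"
    unfolding U_def sum_players_resources[OF vS] by (simp add: sum_distrib_left)
  also have "\<dots> = 2 * (\<Sum>i<n. cost (X (Suc (lm i))) i)"
    unfolding player_cost_def using final by simp
  finally show ?thesis unfolding S_def lm_def .
qed

end

section \<open>One fair covering\<close>

locale covering = br_segment +
  fixes \<beta> :: real and Opt :: "nat \<Rightarrow> nat set"
  assumes fair: "\<forall>i<n. 1 \<le> card {t\<in>{t0..<t0+T}. p t = i} \<and> real (card {t\<in>{t0..<t0+T}. p t = i}) \<le> \<beta>"
    and valid_opt: "valid Opt"
begin

lemma every_player_moves: "\<forall>i<n. moves i (t0 + T) \<noteq> {}"
  using fair unfolding moves_def by (metis card.empty not_one_le_zero)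

lemma mover_cost_le:
  assumes M: "\<And>t e. t0 \<le> t \<Longrightarrow> t < t0 + T \<Longrightarrow> e \<in> E \<Longrightarrow> ld (X t) e \<le> M e"
    and \<tau>: "t0 \<le> \<tau>" "\<tau> < t0 + T"
  shows "cost (X (Suc \<tau>)) (p \<tau>) \<le> deviation_cost M (Opt (p \<tau>))"
proof -
  have i: "p \<tau> < n" using mover_lt_n[OF \<tau>] .
  have Opt: "Opt (p \<tau>) \<in> Sg (p \<tau>)" using valid_opt i unfolding valid_profile_def by auto
  have "cost (X (Suc \<tau>)) (p \<tau>) \<le> deviation_cost (ld (X \<tau>)) (Opt (p \<tau>))"
    by (rule best_response_cost_bound[OF br_step[OF \<tau>] Opt])
  also have "\<dots> \<le> deviation_cost M (Opt (p \<tau>))"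
    using strategy_subset[OF i Opt] M[OF \<tau>] by (intro deviation_cost_mono) auto
  finally show ?thesis .
qed

lemma social_cost_after_covering:
  assumes M: "\<And>t e. t0 \<le> t \<Longrightarrow> t < t0 + T \<Longrightarrow> e \<in> E \<Longrightarrow> ld (X t) e \<le> M e"
  shows "SC (X (t0 + T)) \<le> 2 * (\<Sum>e\<in>E. a e * ld Opt e * M e) + 2 * SC Opt"
proof -
  have "cost (X (Suc (last_move i (t0 + T)))) i \<le> deviation_cost M (Opt i)" if "i < n" for i
    using mover_cost_le[OF M] last_move_in[of i "t0 + T"] every_player_moves that by metis
  hence "(\<Sum>i<n. cost (X (Suc (last_move i (t0 + T)))) i) \<le> (\<Sum>i<n. deviation_cost M (Opt i))"
    by (intro sum_mono) auto
  also have "\<dots> \<le> (\<Sum>e\<in>E. a e * ld Opt e * M e) + SC Opt"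
    by (rule sum_deviation_costs[OF valid_opt])
  finally show ?thesis
    using social_cost_le_last_move_costs[OF every_player_moves] by linarith
qed

text \<open>Estimate (a): since loads never exceed n, one covering brings the cost down to
  (2n + 2) C(Opt) from any starting profile.\<close>
lemma social_cost_after_covering_le_n: "SC (X (t0 + T)) \<le> (2 * real n + 2) * SC Opt"
proof -
  have "(\<Sum>e\<in>E. a e * ld Opt e * real n) = real n * (\<Sum>e\<in>E. a e * ld Opt e)"
    by (simp add: sum_distrib_left mult.commute mult.left_commute)
  also have "\<dots> \<le> real n * SC Opt"
  proof (intro mult_left_mono order_trans[OF _ quadratic_part_le_social_cost[OF valid_opt]])
    show "(\<Sum>e\<in>E. a e * ld Opt e) \<le> (\<Sum>e\<in>E. a e * (ld Opt e)\<^sup>2)"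
      using a_nonneg load_le_square by (intro sum_mono mult_left_mono) auto
  qed simp
  finally have "(\<Sum>e\<in>E. a e * ld Opt e * real n) \<le> real n * SC Opt" .
  moreover have "SC (X (t0 + T)) \<le> 2 * (\<Sum>e\<in>E. a e * ld Opt e * real n) + 2 * SC Opt"
    using load_le_n by (intro social_cost_after_covering) simp
  ultimately show ?thesis by (simp add: algebra_simps)
qed

text \<open>The a-weighted mover loads are paid by the movers; each player moves at most
  beta times and pays at most its deviation cost each time.\<close>
lemma weighted_mover_load_le_deviations:
  assumes M: "\<And>t e. t0 \<le> t \<Longrightarrow> t < t0 + T \<Longrightarrow> e \<in> E \<Longrightarrow> ld (X t) e \<le> M e"
    and M_nonneg: "\<And>e. M e \<ge> 0" and \<beta>: "\<beta> \<ge> 1"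
  shows "(\<Sum>e\<in>E. a e * mover_load e) \<le> \<beta> * ((\<Sum>e\<in>E. a e * ld Opt e * M e) + SC Opt)"
proof -
  have dev_nonneg: "deviation_cost M (Opt i) \<ge> 0" if "i < n" for i
    unfolding deviation_cost_def using valid_subset[OF valid_opt that] a_nonneg b_nonneg M_nonneg
    by (intro sum_nonneg add_nonneg_nonneg mult_nonneg_nonneg) auto
  have "(\<Sum>e\<in>E. a e * mover_load e) \<le> (\<Sum>\<tau>\<in>{t0..<t0+T}. cost (X (Suc \<tau>)) (p \<tau>))"
    by (rule weighted_mover_load_le)
  also have "\<dots> \<le> (\<Sum>\<tau>\<in>{t0..<t0+T}. deviation_cost M (Opt (p \<tau>)))"
    using mover_cost_le[OF M] by (intro sum_mono) auto
  also have "\<dots> = (\<Sum>i<n. real (card (moves i (t0 + T))) * deviation_cost M (Opt i))"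
    by (rule sum_over_moves)
  also have "\<dots> \<le> (\<Sum>i<n. \<beta> * deviation_cost M (Opt i))"
    using fair dev_nonneg unfolding moves_def by (intro sum_mono mult_right_mono) auto
  also have "\<dots> = \<beta> * (\<Sum>i<n. deviation_cost M (Opt i))" by (simp add: sum_distrib_left)
  also have "\<dots> \<le> \<beta> * ((\<Sum>e\<in>E. a e * ld Opt e * M e) + SC Opt)"
    using sum_deviation_costs[OF valid_opt, of M] \<beta> by (intro mult_left_mono) auto
  finally show ?thesis .
qed

text \<open>Use the load bound M_e = l_e(X t0) + sqrt(2 Z_e); the contribution W2 of the square
  roots is bounded via Cauchy-Schwarz and the mover loads, giving a quadratic
  inequality for W2.\<close>
lemma social_cost_after_covering_mixed:
  assumes \<beta>: "\<beta> \<ge> 1" and U: "SC Opt > 0"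
  shows "SC (X (t0 + T)) \<le> 10 * \<beta> * SC Opt + 4 * (\<Sum>e\<in>E. a e * ld Opt e * ld (X t0) e)"
proof -
  define Z where "Z = mover_load"
  define M where "M e = ld (X t0) e + sqrt (2 * Z e)" for e
  define W1 where "W1 = (\<Sum>e\<in>E. a e * ld Opt e * ld (X t0) e)"
  define W2 where "W2 = (\<Sum>e\<in>E. a e * ld Opt e * sqrt (2 * Z e))"
  have Z_nonneg: "Z e \<ge> 0" for e unfolding Z_def by (rule mover_load_nonneg)
  have M: "ld (X t) e \<le> M e" if "t0 \<le> t" "t < t0 + T" for t e
    unfolding M_def Z_def using load_during_segment that by simp
  have W: "(\<Sum>e\<in>E. a e * ld Opt e * M e) = W1 + W2"
    unfolding W1_def W2_def M_def by (simp add: algebra_simps sum.distrib)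
  have W1_nonneg: "W1 \<ge> 0" unfolding W1_def using a_nonneg by (intro sum_nonneg) auto
  have aZ: "(\<Sum>e\<in>E. a e * Z e) \<le> \<beta> * (W1 + W2 + SC Opt)"
    using weighted_mover_load_le_deviations[of M] M Z_nonneg \<beta> W
    unfolding Z_def M_def by simp
  have "W2\<^sup>2 \<le> (\<Sum>e\<in>E. a e * (ld Opt e)\<^sup>2) * (\<Sum>e\<in>E. a e * (sqrt (2 * Z e))\<^sup>2)"
    unfolding W2_def using a_nonneg by (rule weighted_Cauchy_Schwarz)
  also have "(\<Sum>e\<in>E. a e * (sqrt (2 * Z e))\<^sup>2) = 2 * (\<Sum>e\<in>E. a e * Z e)"
    using Z_nonneg by (simp add: sum_distrib_left mult.left_commute)
  also have "(\<Sum>e\<in>E. a e * (ld Opt e)\<^sup>2) * (2 * (\<Sum>e\<in>E. a e * Z e))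
      \<le> SC Opt * (2 * (\<beta> * (W1 + W2 + SC Opt)))"
    using quadratic_part_le_social_cost[OF valid_opt] quadratic_part_nonneg aZ U
      a_nonneg Z_nonneg by (intro mult_mono sum_nonneg mult_nonneg_nonneg) auto
  finally have "W2\<^sup>2 \<le> 2 * (\<beta> * SC Opt) * (W1 + W2 + SC Opt)" by (simp add: algebra_simps)
  hence "W2 \<le> 4 * (\<beta> * SC Opt) + W1"
    using U \<beta> W1_nonneg by (intro quadratic_self_bound) auto
  moreover have "SC (X (t0 + T)) \<le> 2 * (W1 + W2) + 2 * SC Opt"
    using social_cost_after_covering[of M] M W by simp
  moreover have "SC Opt \<le> \<beta> * SC Opt" using \<beta> U by simp
  ultimately show ?thesis unfolding W1_def by (simp add: algebra_simps)
qed

lemma normalised_cost_first_covering: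
  assumes "n \<ge> 1" "\<beta> \<ge> 1" "SC Opt > 0"
  shows "max 1 (SC (X (t0 + T)) / (64 * \<beta> * SC Opt)) \<le> real n"
proof -
  have "(2 * real n + 2) * SC Opt \<le> (64 * real n) * SC Opt"
    using assms by (intro mult_right_mono) auto
  also have "\<dots> \<le> (64 * real n) * (\<beta> * SC Opt)"
    using assms by (intro mult_left_mono) auto
  finally have "SC (X (t0 + T)) \<le> real n * (64 * \<beta> * SC Opt)"
    using social_cost_after_covering_le_n by (simp add: algebra_simps)
  thus ?thesis using assms by (simp add: pos_divide_le_eq)
qed

lemma normalised_cost_squared_down:
  assumes "\<beta> \<ge> 1" "SC Opt > 0"
  shows "(max 1 (SC (X (t0 + T)) / (64 * \<beta> * SC Opt)))\<^sup>2 \<le> max 1 (SC (X t0) / (64 * \<beta> * SC Opt))"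
proof (rule normalised_cost_square[OF assms(1,2)])
  show "SC (X t0) \<ge> 0" using social_cost_nonneg[OF valid_start] .
  show "(\<Sum>e\<in>E. a e * ld Opt e * ld (X t0) e) \<ge> 0" using a_nonneg by (intro sum_nonneg) auto
  show "(\<Sum>e\<in>E. a e * ld Opt e * ld (X t0) e)\<^sup>2 \<le> SC Opt * SC (X t0)"
    by (rule mixed_load_term_square[OF valid_opt valid_start])
  show "SC (X (t0 + T)) \<le> 10 * \<beta> * SC Opt + 4 * (\<Sum>e\<in>E. a e * ld Opt e * ld (X t0) e)"
    by (rule social_cost_after_covering_mixed[OF assms])
qed

end

lemma covering_of_fair_dynamics:
  assumes game: "linear_congestion_game n E Sg a b" and start: "valid_profile n Sg (X 0)"
    and steps: "\<forall>t < K * T. best_response_step n Sg a b (X t) (p t) (X (Suc t))"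
    and fair: "\<forall>k < K. bounded_covering n \<beta> T p k"
    and opt: "valid_profile n Sg Opt" and k: "k < K"
  shows "covering n E Sg a b X p (k * T) T \<beta> Opt"
proof -
  have bound: "k * T + T \<le> K * T" using k by (metis add.commute mult_Suc mult_le_mono1 Suc_leI)
  interpret whole: br_segment n E Sg a b X p 0 "K * T"
    using game start steps by unfold_locales auto
  show ?thesis
  proof unfold_locales
    show "\<forall>t\<in>{k * T..<k * T + T}. best_response_step n Sg a b (X t) (p t) (X (Suc t))"
      using steps bound by auto
    show "valid_profile n Sg (X (k * T))"
      by (rule whole.valid_during) (use bound in linarith)+
    show "\<forall>i<n. 1 \<le> card {t \<in> {k * T..<k * T + T}. p t = i}
        \<and> real (card {t \<in> {k * T..<k * T + T}. p t = i}) \<le> \<beta>"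
      using fair k unfolding bounded_covering_def by (simp add: add.commute)
  qed (use game opt in \<open>simp_all add: game_def\<close>)
qed

theorem theorem1:
  "\<exists>c::real. c > 0 \<and>
    (\<forall>(n::nat) E \<Sigma> a b (\<beta>::real) (T::nat) (X::nat \<Rightarrow> nat \<Rightarrow> nat set) (p::nat \<Rightarrow> nat).
       linear_congestion_game n E \<Sigma> a b \<and> n \<ge> 3 \<and> OPT n \<Sigma> a b > 0 \<and>
       \<beta> \<ge> 1 \<and> T \<ge> n \<and>
       valid_profile n \<Sigma> (X 0) \<and>
       (\<forall>t < nat \<lceil>log 2 (log 2 (real n))\<rceil> * T. best_response_step n \<Sigma> a b (X t) (p t) (X (Suc t))) \<and>
       (\<forall>k < nat \<lceil>log 2 (log 2 (real n))\<rceil>. bounded_covering n \<beta> T p k)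
       \<longrightarrow> social_cost a b n (X (nat \<lceil>log 2 (log 2 (real n))\<rceil> * T)) \<le> c * \<beta> * OPT n \<Sigma> a b)"
proof (intro exI[of _ 256] conjI allI impI)
  fix n E \<Sigma> a b \<beta> T X p
  define K where "K = nat \<lceil>log 2 (log 2 (real n))\<rceil>"
  assume "linear_congestion_game n E \<Sigma> a b \<and> n \<ge> 3 \<and> OPT n \<Sigma> a b > 0 \<and> \<beta> \<ge> 1 \<and> T \<ge> n \<and>
       valid_profile n \<Sigma> (X 0) \<and>
       (\<forall>t < nat \<lceil>log 2 (log 2 (real n))\<rceil> * T. best_response_step n \<Sigma> a b (X t) (p t) (X (Suc t))) \<and>
       (\<forall>k < nat \<lceil>log 2 (log 2 (real n))\<rceil>. bounded_covering n \<beta> T p k)"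
  hence game: "linear_congestion_game n E \<Sigma> a b" and n: "n \<ge> 3" and U: "OPT n \<Sigma> a b > 0"
    and \<beta>: "\<beta> \<ge> 1" and dyn: "valid_profile n \<Sigma> (X 0)"
      "\<forall>t < K * T. best_response_step n \<Sigma> a b (X t) (p t) (X (Suc t))"
      "\<forall>k < K. bounded_covering n \<beta> T p k"
    unfolding K_def by auto
  interpret game n E \<Sigma> a b by (rule game.intro[OF game])
  obtain Opt where Opt: "valid Opt" "SC Opt = OPT n \<Sigma> a b" by (rule optimum_exists)
  define z where "z k = max 1 (SC (X (k * T)) / (64 * \<beta> * OPT n \<Sigma> a b))" for k
  have cov: "covering n E \<Sigma> a b X p (k * T) T \<beta> Opt" if "k < K" for k
    using covering_of_fair_dynamics[OF game dyn Opt(1) that] .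
  have K: "1 \<le> K" "real n \<le> 2 ^ (2 ^ K)" using loglog_rounds[OF n] unfolding K_def by auto
  have "z K \<le> 4"
  proof (rule iterated_square_root_bound[OF K(1)])
    have "z 1 \<le> real n"
      using covering.normalised_cost_first_covering[OF cov[of 0]] K(1) n \<beta> U Opt(2)
      unfolding z_def by simp
    thus "z 1 \<le> 2 ^ (2 ^ K)" using K(2) by linarith
    show "(z (Suc k))\<^sup>2 \<le> z k" if "1 \<le> k" "k < K" for k
      using covering.normalised_cost_squared_down[OF cov[OF that(2)]] \<beta> U Opt(2)
      unfolding z_def by (simp add: add.commute)
  qed (simp add: z_def)
  hence "SC (X (K * T)) \<le> 4 * (64 * \<beta> * OPT n \<Sigma> a b)"
    using \<beta> U unfolding z_def by (simp add: pos_divide_le_eq)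
  thus "SC (X (nat \<lceil>log 2 (log 2 (real n))\<rceil> * T)) \<le> 256 * \<beta> * OPT n \<Sigma> a b"
    unfolding K_def by simp
qed simp

end
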